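(* For every $t\in\mathbb N_T$, every $m\in\mathcal M_n$ and every $\gamma\in\mathcal G$, $$\mathbb E\big[\|\bar f_t(m,\gamma,\mathbf w)-\hat f_t(m,\gamma)\|_\infty\big]\le\mathcal O(1/\sqrt n),$$ where the expectation is over $\mathbf w=(w^1,\dots,w^n)$ with $w^1,\dots,w^n$ i.i.d. with law $\mathbb P(w_t=\cdot)$.
   Context: Let $n,T\in\mathbb N$, $\mathbb N_T=\{1,\dots,T\}$, $\mathcal X,\mathcal U,\mathcal W$ finite sets, $\mathcal I(\mathcal X)=[0,1]^{\mathcal X}$, $\Delta(\mathcal X)$ the probability vectors on $\mathcal X$, $\mathcal M_n=\{m\in\Delta(\mathcal X): m(x)\in\{0,\tfrac1n,\dots,1\}\}$. For each $t$, $f_t:\mathcal X\times\mathcal U\times\mathcal W\times\mathcal I(\mathcal X)\to\mathcal X$, $\mathbb P(w_t=\cdot)$ a probability law on $\mathcal W$, and $\mathbb P(y|x,u,z)=\sum_w\mathbb 1(f_t(x,u,w,z)=y)\mathbb P(w_t=w)$. $\mathcal G$ is the set of maps $\gamma:\mathcal X\to\mathcal U$. Define $\hat f_t(z,\gamma)(y)=\sum_x z(x)\mathbb P(y|x,\gamma(x),z)$ and, for $\mathbf w=(w^1,\dots,w^n)\in\mathcal W^n$, $$\bar f_t(m,\gamma,\mathbf w)(y)=\sum_{x\in\mathcal X}\sum_{w\in\mathcal W}\mathbb 1\big(f_t(x,\gamma(x),w,m)=y\big)\,m(x)\,\frac1n\sum_{i=1}^n\mathbb 1(w^i=w),\quad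 y\in\mathcal X.$$ The data $T,\mathcal X,\mathcal U,\mathcal W,f_t$ and the noise laws do not depend on $n$; $\mathcal O(1/\sqrt n)$ denotes a quantity bounded by $C/\sqrt n$ with $C$ independent of $n$ (and of $m,\gamma$). *)

theory Defs
  imports "HOL-Probability.Probability"
begin

definition trans_prob ::
  "(nat \<Rightarrow> 'x \<Rightarrow> 'u \<Rightarrow> 'w::finite \<Rightarrow> ('x \<Rightarrow> real) \<Rightarrow> 'x) \<Rightarrow> (nat \<Rightarrow> 'w pmf)
    \<Rightarrow> nat \<Rightarrow> 'x \<Rightarrow> 'x \<Rightarrow> 'u \<Rightarrow> ('x \<Rightarrow> real) \<Rightarrow> real" where
  "trans_prob f Pw t y x u z = (\<Sum>w\<in>UNIV. (if f t x u w z = y then 1 else 0) * pmf (Pw t) w)"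

definition hat_f ::
  "(nat \<Rightarrow> 'x::finite \<Rightarrow> 'u \<Rightarrow> 'w::finite \<Rightarrow> ('x \<Rightarrow> real) \<Rightarrow> 'x) \<Rightarrow> (nat \<Rightarrow> 'w pmf)
    \<Rightarrow> nat \<Rightarrow> ('x \<Rightarrow> real) \<Rightarrow> ('x \<Rightarrow> 'u) \<Rightarrow> 'x \<Rightarrow> real" where
  "hat_f f Pw t z \<gamma> y = (\<Sum>x\<in>UNIV. z x * trans_prob f Pw t y x (\<gamma> x) z)"

definition bar_f ::
  "(nat \<Rightarrow> 'x::finite \<Rightarrow> 'u \<Rightarrow> 'w::finite \<Rightarrow> ('x \<Rightarrow> real) \<Rightarrow> 'x) \<Rightarrow> nat
    \<Rightarrow> nat \<Rightarrow> ('x \<Rightarrow> real) \<Rightarrow> ('x \<Rightarrow> 'u) \<Rightarrow> 'w list \<Rightarrow> 'x \<Rightarrow> real" where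
  "bar_f f n t m \<gamma> ws y =
     (\<Sum>x\<in>UNIV. \<Sum>w\<in>UNIV. (if f t x (\<gamma> x) w m = y then 1 else 0) * m x *
        ((1 / real n) * (\<Sum>i<n. if ws ! i = w then 1 else 0)))"

definition sup_norm :: "('x::finite \<Rightarrow> real) \<Rightarrow> real" where
  "sup_norm v = Max (range (\<lambda>x. \<bar>v x\<bar>))"

definition emp_dists :: "nat \<Rightarrow> ('x::finite \<Rightarrow> real) set" where
  "emp_dists n = {m. (\<forall>x. m x \<ge> 0) \<and> (\<Sum>x\<in>UNIV. m x) = 1 \<and>
                     (\<forall>x. \<exists>k::nat. k \<le> n \<and> m x = real k / real n)}"

end

theory Submission
  imports Defs
begin

text \<open>The difference \<open>bar_f - hat_f\<close> is an \<open>m\<close>-weighted average of 0/1-weighted deviations of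
the empirical frequencies of the noise sample from its law, so its sup norm is at most
\<open>\<Sum>w. \<bar>freq w - P(w\<^sub>t = w)\<bar>\<close>. Each deviation is the mean of \<open>n\<close> i.i.d. centred variables bounded
by 1, so its second moment is at most \<open>1/n\<close> and, by Jensen, its expected absolute value is at
most \<open>1/\<surd>n\<close>. Hence \<open>C\<close> can be taken to be the number of noise values.\<close>

lemma finite_set_pmf_replicate_pmf:
  assumes "finite (set_pmf p)"
  shows "finite (set_pmf (replicate_pmf n p))"
  using finite_lists_length_eq[OF assms, of n] by (simp add: set_replicate_pmf lists_eq_set)

lemma expectation_replicate_pmf_Suc:
  fixes h :: "'a list \<Rightarrow> real"
  assumes "finite (set_pmf p)"
  shows "measure_pmf.expectation (replicate_pmf (Suc n) p) h =
    measure_pmf.expectation p (\<lambda>a. measure_pmf.expectation (replicate_pmf n p) (\<lambda>xs. h (a # xs)))"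
proof -
  have "replicate_pmf (Suc n) p = p \<bind> (\<lambda>a. map_pmf (Cons a) (replicate_pmf n p))"
    by (simp add: map_pmf_def)
  then show ?thesis
    using assms finite_set_pmf_replicate_pmf[OF assms]
    by (simp add: pmf_expectation_bind[of "set_pmf p"] integral_measure_pmf_real[of "set_pmf p"] mult.commute)
qed

lemma expectation_sum_list_replicate_pmf:
  fixes g :: "'a \<Rightarrow> real"
  assumes "finite (set_pmf p)"
  shows "measure_pmf.expectation (replicate_pmf n p) (\<lambda>xs. sum_list (map g xs)) =
    n * measure_pmf.expectation p g"
proof (induction n)
  case (Suc n)
  have "integrable (replicate_pmf n p) h" for h :: "'a list \<Rightarrow> real"
    by (intro integrable_measure_pmf_finite finite_set_pmf_replicate_pmf assms)
  with Suc.IH assms show ?case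
    unfolding expectation_replicate_pmf_Suc[OF assms]
    by (simp add: integrable_measure_pmf_finite algebra_simps)
qed simp

lemma second_moment_sum_list_replicate_pmf:
  fixes g :: "'a \<Rightarrow> real"
  assumes fin: "finite (set_pmf p)" and centered: "measure_pmf.expectation p g = 0"
  shows "measure_pmf.expectation (replicate_pmf n p) (\<lambda>xs. (sum_list (map g xs))\<^sup>2) =
    n * measure_pmf.expectation p (\<lambda>a. (g a)\<^sup>2)"
proof (induction n)
  case (Suc n)
  let ?E = "measure_pmf.expectation (replicate_pmf n p)"
  have int: "integrable (replicate_pmf n p) h" for h :: "'a list \<Rightarrow> real"
    by (intro integrable_measure_pmf_finite finite_set_pmf_replicate_pmf fin)
  have "?E (\<lambda>xs. (g a + sum_list (map g xs))\<^sup>2) =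
      (g a)\<^sup>2 + 2 * g a * ?E (\<lambda>xs. sum_list (map g xs)) + ?E (\<lambda>xs. (sum_list (map g xs))\<^sup>2)" for a
    using int by (simp add: power2_sum)
  then have "?E (\<lambda>xs. (g a + sum_list (map g xs))\<^sup>2) = (g a)\<^sup>2 + n * measure_pmf.expectation p (\<lambda>a. (g a)\<^sup>2)" for a
    by (simp add: Suc.IH expectation_sum_list_replicate_pmf[OF fin] centered)
  with fin show ?case
    unfolding expectation_replicate_pmf_Suc[OF fin]
    by (simp add: integrable_measure_pmf_finite algebra_simps)
qed simp

lemma (in prob_space) expectation_abs_le_sqrt_second_moment:
  fixes X :: "'a \<Rightarrow> real"
  assumes "integrable M X" and "integrable M (\<lambda>x. (X x)\<^sup>2)"
  shows "expectation (\<lambda>x. \<bar>X x\<bar>) \<le> sqrt (expectation (\<lambda>x. (X x)\<^sup>2))"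
proof (rule real_le_rsqrt)
  have "0 \<le> variance (\<lambda>x. \<bar>X x\<bar>)"
    by (rule variance_positive)
  then show "(expectation (\<lambda>x. \<bar>X x\<bar>))\<^sup>2 \<le> expectation (\<lambda>x. (X x)\<^sup>2)"
    using assms by (simp add: variance_eq)
qed

definition empirical_freq :: "nat \<Rightarrow> 'a list \<Rightarrow> 'a \<Rightarrow> real" where
  "empirical_freq n ws a = (1 / real n) * (\<Sum>i<n. if ws ! i = a then 1 else 0)"

lemma empirical_freq_diff_eq_sum_list:
  assumes "length ws = n" and "n > 0"
  shows "empirical_freq n ws a - q = sum_list (map (\<lambda>x. (if x = a then 1 else 0) - q) ws) / n"
  using assms by (simp add: empirical_freq_def sum_list_sum_nth atLeast0LessThan sum_subtractf field_simps)

lemma expectation_abs_empirical_freq_diff_le: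
  assumes fin: "finite (set_pmf p)" and n: "n > 0"
  shows "measure_pmf.expectation (replicate_pmf n p) (\<lambda>ws. \<bar>empirical_freq n ws a - pmf p a\<bar>)
    \<le> 1 / sqrt n"
proof -
  define g where "g = (\<lambda>x. (if x = a then 1 else 0) - pmf p a)"
  let ?S = "\<lambda>ws. sum_list (map g ws)"
  let ?E = "measure_pmf.expectation (replicate_pmf n p)"
  have int: "integrable (replicate_pmf n p) h" for h :: "'a list \<Rightarrow> real"
    by (intro integrable_measure_pmf_finite finite_set_pmf_replicate_pmf fin)
  have "measure_pmf.expectation p (\<lambda>x. if x = a then 1 else 0) = pmf p a"
    by (subst integral_measure_pmf_real[of "{a}"]) (auto split: if_splits)
  then have centered: "measure_pmf.expectation p g = 0"
    using fin unfolding g_def by (simp add: integrable_measure_pmf_finite)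
  have "(g x)\<^sup>2 \<le> 1" for x
    using pmf_le_1[of p a] pmf_nonneg[of p a] by (simp add: g_def abs_square_le_1)
  then have variance_le: "measure_pmf.expectation p (\<lambda>x. (g x)\<^sup>2) \<le> 1"
    using measure_pmf.integral_le_const[of p "\<lambda>x. (g x)\<^sup>2" 1] fin
    by (simp add: integrable_measure_pmf_finite)
  have "?E (\<lambda>ws. \<bar>empirical_freq n ws a - pmf p a\<bar>) = ?E (\<lambda>ws. \<bar>?S ws / n\<bar>)"
    using n by (intro integral_cong_AE) (auto simp: AE_measure_pmf_iff set_replicate_pmf
        empirical_freq_diff_eq_sum_list g_def)
  also have "\<dots> \<le> sqrt (?E (\<lambda>ws. (?S ws / n)\<^sup>2))"
    by (intro measure_pmf.expectation_abs_le_sqrt_second_moment int)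
  also have "?E (\<lambda>ws. (?S ws / n)\<^sup>2) = measure_pmf.expectation p (\<lambda>x. (g x)\<^sup>2) / n"
    using n by (simp add: power_divide second_moment_sum_list_replicate_pmf[OF fin centered])
      (simp add: power2_eq_square)
  also have "sqrt \<dots> \<le> sqrt (1 / n)"
    using variance_le n by (simp add: divide_right_mono)
  finally show ?thesis
    by (simp add: real_sqrt_divide)
qed

lemma sup_norm_le_iff: "sup_norm v \<le> c \<longleftrightarrow> (\<forall>x. \<bar>v x\<bar> \<le> c)"
  by (simp add: sup_norm_def)

lemma bar_f_minus_hat_f:
  "bar_f f n t m \<gamma> ws y - hat_f f Pw t m \<gamma> y =
    (\<Sum>x\<in>UNIV. m x * (\<Sum>w\<in>UNIV. (if f t x (\<gamma> x) w m = y then 1 else 0) *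
      (empirical_freq n ws w - pmf (Pw t) w)))"
  by (simp add: bar_f_def hat_f_def trans_prob_def empirical_freq_def sum_distrib_left
      right_diff_distrib sum_subtractf mult_ac)

lemma sup_norm_bar_f_minus_hat_f_le:
  assumes nonneg: "\<And>x. m x \<ge> 0" and sum_one: "(\<Sum>x\<in>UNIV. m x) = 1"
  shows "sup_norm (\<lambda>y. bar_f f n t m \<gamma> ws y - hat_f f Pw t m \<gamma> y)
    \<le> (\<Sum>w\<in>UNIV. \<bar>empirical_freq n ws w - pmf (Pw t) w\<bar>)"
  unfolding sup_norm_le_iff bar_f_minus_hat_f
proof
  fix y
  let ?D = "\<Sum>w\<in>UNIV. \<bar>empirical_freq n ws w - pmf (Pw t) w\<bar>"
  have inner: "\<bar>\<Sum>w\<in>UNIV. (if f t x (\<gamma> x) w m = y then 1 else 0) *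
      (empirical_freq n ws w - pmf (Pw t) w)\<bar> \<le> ?D" for x
    by (rule order_trans[OF sum_abs]) (intro sum_mono, simp)
  have "\<bar>\<Sum>x\<in>UNIV. m x * (\<Sum>w\<in>UNIV. (if f t x (\<gamma> x) w m = y then 1 else 0) *
      (empirical_freq n ws w - pmf (Pw t) w))\<bar> \<le> (\<Sum>x\<in>UNIV. m x * ?D)"
    by (rule order_trans[OF sum_abs]) (intro sum_mono, simp add: abs_mult nonneg inner mult_left_mono)
  also have "\<dots> = ?D"
    by (simp add: sum_one flip: sum_distrib_right)
  finally show "\<bar>\<Sum>x\<in>UNIV. m x * (\<Sum>w\<in>UNIV. (if f t x (\<gamma> x) w m = y then 1 else 0) *
      (empirical_freq n ws w - pmf (Pw t) w))\<bar> \<le> ?D" .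
qed

theorem lemma4:
  fixes T :: nat
    and f :: "nat \<Rightarrow> 'x::finite \<Rightarrow> 'u::finite \<Rightarrow> 'w::finite \<Rightarrow> ('x \<Rightarrow> real) \<Rightarrow> 'x"
    and Pw :: "nat \<Rightarrow> 'w pmf"
  shows "\<exists>C. \<forall>n::nat. n \<ge> 1 \<longrightarrow>
           (\<forall>t\<in>{1..T}. \<forall>m\<in>emp_dists n. \<forall>\<gamma>::'x \<Rightarrow> 'u.
              measure_pmf.expectation (replicate_pmf n (Pw t))
                (\<lambda>ws. sup_norm (\<lambda>y. bar_f f n t m \<gamma> ws y - hat_f f Pw t m \<gamma> y))
              \<le> C / sqrt (real n))"
proof (intro exI[of _ "real CARD('w)"] allI impI ballI)
  fix n t :: nat and m :: "'x \<Rightarrow> real" and \<gamma> :: "'x \<Rightarrow> 'u"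
  assume n: "n \<ge> 1" and "m \<in> emp_dists n"
  then have nonneg: "\<And>x. m x \<ge> 0" and sum_one: "(\<Sum>x\<in>UNIV. m x) = 1"
    by (auto simp: emp_dists_def)
  let ?E = "measure_pmf.expectation (replicate_pmf n (Pw t))"
  have int: "integrable (replicate_pmf n (Pw t)) h" for h :: "'w list \<Rightarrow> real"
    by (intro integrable_measure_pmf_finite finite_set_pmf_replicate_pmf) simp
  have "?E (\<lambda>ws. sup_norm (\<lambda>y. bar_f f n t m \<gamma> ws y - hat_f f Pw t m \<gamma> y))
      \<le> ?E (\<lambda>ws. \<Sum>w\<in>UNIV. \<bar>empirical_freq n ws w - pmf (Pw t) w\<bar>)"
    by (intro integral_mono int sup_norm_bar_f_minus_hat_f_le nonneg sum_one)
  also have "\<dots> = (\<Sum>w\<in>UNIV. ?E (\<lambda>ws. \<bar>empirical_freq n ws w - pmf (Pw t) w\<bar>))"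
    by (intro Bochner_Integration.integral_sum int)
  also have "\<dots> \<le> (\<Sum>w\<in>(UNIV::'w set). 1 / sqrt n)"
    using n by (intro sum_mono expectation_abs_empirical_freq_diff_le) auto
  finally show "?E (\<lambda>ws. sup_norm (\<lambda>y. bar_f f n t m \<gamma> ws y - hat_f f Pw t m \<gamma> y))
      \<le> real CARD('w) / sqrt (real n)"
    by simp
qed

end
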